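(* For every $n\in\mathbb{N}^+$ there is a 2-layer MLP with ReGLU activation, $f(x) = W_2[(W_1x+b_1)\otimes\operatorname{ReLU}(Vx+b_2)]+b$, such that for all $x = [x_1;x_2]\in\mathbb{R}^{2n}$ with $x_1,x_2\in\mathbb{R}^n$, $f(x) = x_1\otimes x_2$.
   Context: $\otimes$ denotes elementwise multiplication, $\operatorname{ReLU}$ is applied elementwise, and $[x_1;x_2]$ denotes concatenation. *)

theory Defs
  imports Complex_Main
begin

text \<open>Vectors in R^d are represented as functions nat => real, only entries with
  index < d being relevant; a (r x c)-matrix is a function nat => nat => real,
  only entries with row index < r and column index < c being relevant.\<close>

definition relu :: "real \<Rightarrow> real" where
  "relu t = max 0 t"

definition mat_vec :: "nat \<Rightarrow> (nat \<Rightarrow> nat \<Rightarrow> real) \<Rightarrow> (nat \<Rightarrow> real) \<Rightarrow> nat \<Rightarrow> real" where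
  "mat_vec c A x = (\<lambda>i. \<Sum>j<c. A i j * x j)"

definition reglu_mlp ::
  "nat \<Rightarrow> nat \<Rightarrow> (nat \<Rightarrow> nat \<Rightarrow> real) \<Rightarrow> (nat \<Rightarrow> real) \<Rightarrow> (nat \<Rightarrow> nat \<Rightarrow> real)
   \<Rightarrow> (nat \<Rightarrow> real) \<Rightarrow> (nat \<Rightarrow> nat \<Rightarrow> real) \<Rightarrow> (nat \<Rightarrow> real) \<Rightarrow> (nat \<Rightarrow> real) \<Rightarrow> nat \<Rightarrow> real"
  where
  "reglu_mlp d m W1 b1 V b2 W2 b x =
     (\<lambda>i. mat_vec m W2
            (\<lambda>k. (mat_vec d W1 x k + b1 k) * relu (mat_vec d V x k + b2 k)) i + b i)"

end

theory Submission
  imports Defs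
begin

text \<open>Since \<open>a * b = a * relu b - a * relu (-b)\<close>, take a hidden layer of width \<open>2n\<close>
  in which unit \<open>k\<close> computes \<open>x k * relu (x (n + k))\<close> and unit \<open>n + k\<close> computes
  \<open>x k * relu (- x (n + k))\<close>; the output layer subtracts the second from the first.\<close>

lemma mult_eq_relu_diff: "a * b = a * relu b - a * relu (- b)"
  by (simp add: relu_def max_def)

lemma mat_vec_add_matrix:
  "mat_vec c (\<lambda>i j. A i j + B i j) x i = mat_vec c A x i + mat_vec c B x i"
  by (simp add: mat_vec_def distrib_right sum.distrib)

lemma mat_vec_selection:
  assumes "p i < c"
  shows "mat_vec c (\<lambda>i j. if j = p i then s i else 0) x i = s i * x (p i)"
proof -
  have "mat_vec c (\<lambda>i j. if j = p i then s i else 0) x i = (\<Sum>j<c. if j = p i then s i * x j else 0)"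
    unfolding mat_vec_def by (intro sum.cong) auto
  then show ?thesis
    using assms by simp
qed

theorem mainTheorem7:
  fixes n :: nat
  assumes "n \<ge> 1"
  shows "\<exists>(m::nat) W1 b1 V b2 W2 b.
           \<forall>x :: nat \<Rightarrow> real. \<forall>i<n.
             reglu_mlp (2 * n) m W1 b1 V b2 W2 b x i = x i * x (n + i)"
proof -
  define W1 :: "nat \<Rightarrow> nat \<Rightarrow> real" where "W1 k j = (if j = k mod n then 1 else 0)" for k j
  define V :: "nat \<Rightarrow> nat \<Rightarrow> real"
    where "V k j = (if j = n + k mod n then if k < n then 1 else -1 else 0)" for k j
  define W2 :: "nat \<Rightarrow> nat \<Rightarrow> real"
    where "W2 i k = (if k = i then 1 else 0) + (if k = n + i then -1 else 0)" for i k
  have "reglu_mlp (2 * n) (2 * n) W1 (\<lambda>_. 0) V (\<lambda>_. 0) W2 (\<lambda>_. 0) x i = x i * x (n + i)"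
    if "i < n" for x i
  proof -
    have mod_lt: "k mod n < n" for k
      using assms by simp
    define h where "h k = x (k mod n) * relu ((if k < n then 1 else -1) * x (n + k mod n))" for k
    have hidden: "(mat_vec (2 * n) W1 x k + 0) * relu (mat_vec (2 * n) V x k + 0) = h k" for k
      unfolding W1_def V_def h_def using mod_lt[of k]
      by (simp add: mat_vec_selection[where p = "\<lambda>k. k mod n"]
          mat_vec_selection[where p = "\<lambda>k. n + k mod n"])
    have "mat_vec (2 * n) W2 h i = h i - h (n + i)"
      unfolding W2_def mat_vec_add_matrix using \<open>i < n\<close>
      by (simp add: mat_vec_selection[where p = "\<lambda>i. i"] mat_vec_selection[where p = "\<lambda>i. n + i"])
    also have "\<dots> = x i * x (n + i)"
      using \<open>i < n\<close> by (simp add: h_def mult_eq_relu_diff[symmetric])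
    finally show ?thesis
      unfolding reglu_mlp_def hidden by simp
  qed
  then show ?thesis
    by blast
qed

end
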